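(* Let $s\ge 1$ and $n_0,\dots,n_s,r$ be positive integers. If there exist integers $t\ge r$ and $l_0,\dots,l_s$ with $0\le l_i\le t$ for all $i$ and $\sum_{i=0}^s l_i=t$, such that $$\sum_{i=0}^s 2^t e^{-\frac{(t-l_i)_r}{(t)_r}n_i}\le 1,$$ then $ch(K_{n_0,\dots,n_s})>r$.
   Context: For an integer $a$ and a positive integer $r$, $(a)_r=a(a-1)\cdots(a-r+1)$ denotes the falling factorial. For a graph $G=(V,E)$, the choice number $ch(G)$ is the minimum integer $k$ such that for every assignment of a list $S(v)$ of at least $k$ colors to each vertex $v\in V$, there is a proper vertex coloring of $G$ assigning to each vertex $v$ a color from $S(v)$. $K_{n_0,\dots,n_s}$ denotes the complete $(s+1)$-partite graph with parts of sizes $n_0,\dots,n_s$. *)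

theory Defs
  imports Complex_Main
begin

definition falling_fact :: "int \<Rightarrow> nat \<Rightarrow> real" where
  "falling_fact a r = (\<Prod>k<r. real_of_int (a - int k))"

definition proper_coloring :: "'a set \<Rightarrow> ('a \<Rightarrow> 'a \<Rightarrow> bool) \<Rightarrow> ('a \<Rightarrow> nat) \<Rightarrow> bool" where
  "proper_coloring V E c = (\<forall>u\<in>V. \<forall>v\<in>V. E u v \<longrightarrow> c u \<noteq> c v)"

definition choosable :: "'a set \<Rightarrow> ('a \<Rightarrow> 'a \<Rightarrow> bool) \<Rightarrow> nat \<Rightarrow> bool" where
  "choosable V E k = (\<forall>S :: 'a \<Rightarrow> nat set.
      (\<forall>v\<in>V. finite (S v) \<and> k \<le> card (S v)) \<longrightarrow>
      (\<exists>c. (\<forall>v\<in>V. c v \<in> S v) \<and> proper_coloring V E c))"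

definition choice_number :: "'a set \<Rightarrow> ('a \<Rightarrow> 'a \<Rightarrow> bool) \<Rightarrow> nat" where
  "choice_number V E = (LEAST k. choosable V E k)"

text \<open>Complete (s+1)-partite graph K_{n_0,...,n_s}: vertex (i,j) is the j-th vertex
  of part i (i \<le> s, j < n i); two vertices are adjacent iff they lie in different parts.\<close>
definition cmp_vertices :: "nat \<Rightarrow> (nat \<Rightarrow> nat) \<Rightarrow> (nat \<times> nat) set" where
  "cmp_vertices s n = {(i, j). i \<le> s \<and> j < n i}"

definition cmp_edge :: "nat \<times> nat \<Rightarrow> nat \<times> nat \<Rightarrow> bool" where
  "cmp_edge u v = (fst u \<noteq> fst v)"

end

theory Submission
  imports Defs "HOL-Library.FuncSet"
begin

(* Use all assignments of r-subsets of a T-set as lists. If each of them could be coloured,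
  then, as the colour classes of the parts are disjoint and the L_i sum to T, some part i
  would use a nonempty set A of at most L_i colours meeting every list on that part. For a
  fixed A this happens for at most a fraction (1 - C(T - L_i, r) / C(T, r))^{n_i}, which is
  at most exp (- (T - L_i)_r / (T)_r * n_i), of the assignments; there are fewer than 2^T
  sets A, so the hypothesis makes the union bound miss some assignment. *)

lemma falling_fact_of_nat: "falling_fact (int m) r = fact r * real (m choose r)"
proof -
  have "fact r * real (m choose r) = fact r * (real m gchoose r)"
    by (simp add: binomial_gbinomial)
  also have "\<dots> = (\<Prod>k = 0..<r. real m - real k)"
    by (rule gbinomial_mult_fact)
  finally show ?thesis
    by (simp add: falling_fact_def atLeast0LessThan)
qed

lemma falling_fact_ratio_of_nat:
  "falling_fact (int a) r / falling_fact (int b) r = real (a choose r) / real (b choose r)"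
  by (simp add: falling_fact_of_nat)

lemma one_minus_power_le_exp:
  fixes x :: real
  assumes "x \<le> 1"
  shows "(1 - x) ^ m \<le> exp (- x * real m)"
proof -
  have "(1 - x) ^ m \<le> exp (- x) ^ m"
    using exp_ge_add_one_self[of "- x"] assms by (intro power_mono) auto
  also have "\<dots> = exp (- x * real m)"
    by (simp add: exp_of_nat_mult[symmetric] mult.commute)
  finally show ?thesis .
qed

lemma choosable_mono: "choosable V E k \<Longrightarrow> k \<le> k' \<Longrightarrow> choosable V E k'"
  unfolding choosable_def using le_trans by blast

lemma inj_choice_from_lists:
  assumes "finite V" "\<forall>v\<in>V. finite (S v) \<and> card V \<le> card (S v)"
  shows "\<exists>c. (\<forall>v\<in>V. c v \<in> S v) \<and> inj_on c V"
  using assms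
proof (induction V rule: finite_induct)
  case empty
  then show ?case by auto
next
  case (insert x F)
  then obtain c where c: "\<forall>v\<in>F. c v \<in> S v" "inj_on c F"
    by fastforce
  have "card (c ` F) < card (S x)"
    using insert card_image_le[of F c] by auto
  then obtain y where "y \<in> S x" "y \<notin> c ` F"
    by (meson card_mono finite_imageI insert.hyps(1) not_le subsetI)
  with c insert.hyps(2) show ?case
    by (intro exI[of _ "c(x := y)"]) (auto simp: inj_on_def)
qed

lemma choosable_card:
  assumes "finite V" "\<And>v. \<not> E v v"
  shows "choosable V E (card V)"
  unfolding choosable_def proper_coloring_def
  by (metis inj_choice_from_lists[OF assms(1)] assms(2) inj_on_contraD)

lemma choice_number_gt:
  assumes "finite V" "\<And>v. \<not> E v v" "\<not> choosable V E r"
  shows "r < choice_number V E"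
proof (rule ccontr)
  assume "\<not> r < choice_number V E"
  moreover have "choosable V E (choice_number V E)"
    unfolding choice_number_def using choosable_card[OF assms(1,2)] by (rule LeastI)
  ultimately show False
    using assms(3) choosable_mono by (metis not_less)
qed

lemma disjoint_family_exists_card_le:
  assumes "finite I" "I \<noteq> {}" "finite U" "\<forall>i\<in>I. \<forall>j\<in>I. i \<noteq> j \<longrightarrow> A i \<inter> A j = {}"
    and "\<And>i. i \<in> I \<Longrightarrow> A i \<subseteq> U"
    and "card U \<le> (\<Sum>i\<in>I. L i)"
  shows "\<exists>i\<in>I. card (A i) \<le> L i"
proof (rule ccontr)
  assume "\<not> ?thesis"
  then have "(\<Sum>i\<in>I. Suc (L i)) \<le> (\<Sum>i\<in>I. card (A i))"
    by (intro sum_mono) (simp add: not_le Suc_le_eq)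
  also have "\<dots> = card (\<Union>i\<in>I. A i)"
    using assms(1,4) assms(5)[THEN finite_subset] assms(3) by (intro card_UN_disjoint[symmetric]) auto
  also have "\<dots> \<le> card U"
    using assms(3,5) by (intro card_mono) auto
  finally show False
    using assms(1,2,6) card_gt_0_iff[of I] by (simp add: sum_Suc)
qed

lemma card_PiE_restrict:
  assumes "finite V" "W \<subseteq> V" "R' \<subseteq> R"
  shows "card {S \<in> PiE V (\<lambda>_. R). \<forall>v\<in>W. S v \<in> R'} = card R' ^ card W * card R ^ card (V - W)"
proof -
  have "{S \<in> PiE V (\<lambda>_. R). \<forall>v\<in>W. S v \<in> R'} = PiE V (\<lambda>v. if v \<in> W then R' else R)"
    using assms(2,3) by (auto simp: PiE_def Pi_def)
  moreover have "V \<inter> W = W" "V \<inter> - W = V - W"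
    using assms(2) by auto
  ultimately show ?thesis
    by (simp add: card_PiE[OF assms(1)] if_distrib[of card] prod.If_cases[OF assms(1)]
        del: if_image_distrib)
qed

lemma card_subsets_meeting_le:
  assumes "finite U" "A \<subseteq> U" "card A \<le> L"
  shows "card {X. X \<subseteq> U \<and> card X = r \<and> X \<inter> A \<noteq> {}} \<le> (card U choose r) - (card U - L choose r)"
proof -
  define R where "R = {X. X \<subseteq> U \<and> card X = r}"
  define R0 where "R0 = {X. X \<subseteq> U - A \<and> card X = r}"
  have "{X. X \<subseteq> U \<and> card X = r \<and> X \<inter> A \<noteq> {}} = R - R0" "R0 \<subseteq> R"
    by (auto simp: R_def R0_def)
  moreover have "finite R"
    unfolding R_def using assms(1) by simp
  moreover have "card R = card U choose r"
    unfolding R_def using n_subsets[OF assms(1)] .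
  moreover have "card R0 = (card U - card A) choose r"
    unfolding R0_def using n_subsets[of "U - A" r] assms by (simp add: card_Diff_subset finite_subset)
  moreover have "(card U - L) choose r \<le> (card U - card A) choose r"
    using assms(3) by (intro binomial_right_mono) simp
  ultimately show ?thesis
    by (simp add: card_Diff_subset finite_subset)
qed

lemma card_PiE_meeting_le:
  fixes U :: "'b set" and r :: nat
  defines "R \<equiv> {X. X \<subseteq> U \<and> card X = r}"
  assumes "finite V" "W \<subseteq> V" "finite U" "A \<subseteq> U" "card A \<le> L" "r \<le> card U"
  shows "real (card {S \<in> PiE V (\<lambda>_. R). \<forall>v\<in>W. S v \<inter> A \<noteq> {}})
    \<le> exp (- (real (card U - L choose r) / real (card U choose r)) * real (card W)) * real (card (PiE V (\<lambda>_. R)))"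
proof -
  define N where "N = real (card U choose r)"
  define q where "q = real (card U - L choose r) / N"
  define R' where "R' = {X \<in> R. X \<inter> A \<noteq> {}}"
  have N_pos: "N > 0"
    using assms(7) by (simp add: N_def)
  have card_R: "card R = card U choose r"
    unfolding R_def using n_subsets[OF assms(4)] .
  have "real (card R') \<le> N - real (card U - L choose r)"
    using card_subsets_meeting_le[OF assms(4-6), of r] binomial_right_mono[of "card U - L" "card U" r]
    by (simp add: R'_def R_def N_def)
  also have "\<dots> = N * (1 - q)"
    using N_pos by (simp add: q_def field_simps)
  finally have card_R': "real (card R') \<le> N * (1 - q)" .
  have q_le_1: "q \<le> 1"
    using N_pos binomial_right_mono[of "card U - L" "card U" r] by (simp add: q_def N_def)
  have "card V = card W + card (V - W)"
    using assms(2,3) by (simp add: card_Diff_subset card_mono finite_subset)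
  then have card_PiE_R: "real (card (PiE V (\<lambda>_. R))) = N ^ card W * N ^ card (V - W)"
    by (simp add: card_PiE[OF assms(2)] card_R N_def power_add)
  have "{S \<in> PiE V (\<lambda>_. R). \<forall>v\<in>W. S v \<inter> A \<noteq> {}} = {S \<in> PiE V (\<lambda>_. R). \<forall>v\<in>W. S v \<in> R'}"
    using assms(3) by (auto simp: R'_def)
  then have "real (card {S \<in> PiE V (\<lambda>_. R). \<forall>v\<in>W. S v \<inter> A \<noteq> {}})
      = real (card R') ^ card W * N ^ card (V - W)"
    using card_PiE_restrict[OF assms(2,3), of R' R] by (simp add: R'_def card_R N_def)
  also have "\<dots> \<le> (N * (1 - q)) ^ card W * N ^ card (V - W)"
    using N_pos by (intro mult_right_mono power_mono card_R') auto
  also have "\<dots> = (1 - q) ^ card W * real (card (PiE V (\<lambda>_. R)))"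
    by (simp add: card_PiE_R power_mult_distrib)
  also have "\<dots> \<le> exp (- q * real (card W)) * real (card (PiE V (\<lambda>_. R)))"
    using one_minus_power_le_exp[OF q_le_1] by (intro mult_right_mono) auto
  finally show ?thesis
    by (simp add: q_def N_def)
qed

lemma finite_cmp_vertices: "finite (cmp_vertices s n)"
proof -
  have "cmp_vertices s n = Sigma {..s} (\<lambda>i. {..<n i})"
    by (auto simp: cmp_vertices_def)
  then show ?thesis
    by simp
qed

lemma cmp_part_subset: "i \<le> s \<Longrightarrow> Pair i ` {..<n i} \<subseteq> cmp_vertices s n"
  by (auto simp: cmp_vertices_def)

lemma cmp_coloring_small_class:
  assumes "proper_coloring (cmp_vertices s n) cmp_edge c" "c ` cmp_vertices s n \<subseteq> U" "finite U"
    and "card U \<le> (\<Sum>i=0..s. L i)"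
  shows "\<exists>i\<le>s. card (c ` Pair i ` {..<n i}) \<le> L i"
proof -
  have "\<exists>i\<in>{0..s}. card (c ` Pair i ` {..<n i}) \<le> L i"
  proof (rule disjoint_family_exists_card_le[OF _ _ assms(3) _ _ assms(4)])
    show "\<forall>i\<in>{0..s}. \<forall>j\<in>{0..s}. i \<noteq> j \<longrightarrow> c ` Pair i ` {..<n i} \<inter> c ` Pair j ` {..<n j} = {}"
    proof (intro ballI impI)
      fix i j assume "i \<in> {0..s}" "j \<in> {0..s}" "i \<noteq> j"
      then have "c (i, a) \<noteq> c (j, b)" if "a < n i" "b < n j" for a b
        using assms(1) that by (simp add: proper_coloring_def cmp_edge_def cmp_vertices_def)
      then show "c ` Pair i ` {..<n i} \<inter> c ` Pair j ` {..<n j} = {}"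
        by auto
    qed
    show "c ` Pair i ` {..<n i} \<subseteq> U" if "i \<in> {0..s}" for i
      using assms(2) cmp_part_subset[of i s n] that by auto
  qed auto
  then show ?thesis
    by auto
qed

lemma card_union_bound:
  fixes p :: "'i \<Rightarrow> real"
  assumes "finite \<Omega>" "\<Omega> \<noteq> {}" "finite I" "\<And>i. i \<in> I \<Longrightarrow> finite (F i)"
    and cover: "\<Omega> \<subseteq> (\<Union>i\<in>I. \<Union>A\<in>F i. H i A)" and H_sub: "\<And>i A. H i A \<subseteq> \<Omega>"
    and card_H: "\<And>i A. i \<in> I \<Longrightarrow> A \<in> F i \<Longrightarrow> real (card (H i A)) \<le> p i * real (card \<Omega>)"
    and card_F: "\<And>i. i \<in> I \<Longrightarrow> real (card (F i)) \<le> K" and p_nonneg: "\<And>i. i \<in> I \<Longrightarrow> 0 \<le> p i"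
  shows "1 \<le> K * (\<Sum>i\<in>I. p i)"
proof -
  have "card \<Omega> \<le> card (\<Union>i\<in>I. \<Union>A\<in>F i. H i A)"
    using cover H_sub by (intro card_mono rev_finite_subset[OF assms(1)]) auto
  also have "\<dots> \<le> (\<Sum>i\<in>I. \<Sum>A\<in>F i. card (H i A))"
    using assms(4) by (intro order_trans[OF card_UN_le[OF assms(3)]] sum_mono card_UN_le) auto
  finally have "real (card \<Omega>) \<le> (\<Sum>i\<in>I. \<Sum>A\<in>F i. real (card (H i A)))"
    by (simp flip: of_nat_sum)
  also have "\<dots> \<le> (\<Sum>i\<in>I. K * (p i * real (card \<Omega>)))"
  proof (intro sum_mono)
    fix i assume i: "i \<in> I"
    then have "(\<Sum>A\<in>F i. real (card (H i A))) \<le> real (card (F i)) * (p i * real (card \<Omega>))"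
      using card_H by (intro sum_bounded_above) auto
    also have "\<dots> \<le> K * (p i * real (card \<Omega>))"
      using i by (intro mult_right_mono card_F) (simp_all add: p_nonneg)
    finally show "(\<Sum>A\<in>F i. real (card (H i A))) \<le> K * (p i * real (card \<Omega>))" .
  qed
  also have "\<dots> = K * (\<Sum>i\<in>I. p i) * real (card \<Omega>)"
    by (simp add: sum_distrib_left sum_distrib_right mult_ac)
  finally show ?thesis
    using assms(1,2) by (simp add: card_gt_0_iff)
qed

lemma card_nonempty_subsets_le: "finite U \<Longrightarrow> card {A. A \<subseteq> U \<and> A \<noteq> {} \<and> P A} \<le> 2 ^ card U - 1"
  using card_mono[of "Pow U - {{}}" "{A. A \<subseteq> U \<and> A \<noteq> {} \<and> P A}"] by (auto simp: card_Pow)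

lemma cmp_choosable_lists_meet_small_class:
  fixes U :: "nat set"
  assumes "choosable (cmp_vertices s n) cmp_edge r" "\<forall>i\<le>s. n i > 0" "finite U"
    and "card U \<le> (\<Sum>i=0..s. L i)"
    and S: "S \<in> PiE (cmp_vertices s n) (\<lambda>_. {X. X \<subseteq> U \<and> card X = r})"
  shows "\<exists>i\<le>s. \<exists>A. A \<subseteq> U \<and> A \<noteq> {} \<and> card A \<le> L i \<and> (\<forall>v\<in>Pair i ` {..<n i}. S v \<inter> A \<noteq> {})"
proof -
  have "\<forall>v\<in>cmp_vertices s n. finite (S v) \<and> r \<le> card (S v)"
    using S assms(3) by (auto intro: finite_subset)
  then obtain c where c: "\<forall>v\<in>cmp_vertices s n. c v \<in> S v" "proper_coloring (cmp_vertices s n) cmp_edge c"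
    using assms(1) unfolding choosable_def by blast
  have c_U: "c ` cmp_vertices s n \<subseteq> U"
    using S c(1) by auto
  then obtain i where i: "i \<le> s" "card (c ` Pair i ` {..<n i}) \<le> L i"
    using cmp_coloring_small_class[OF c(2) _ assms(3,4)] by blast
  have "c ` Pair i ` {..<n i} \<subseteq> U" "c ` Pair i ` {..<n i} \<noteq> {}"
    using c_U cmp_part_subset[OF i(1), of n] assms(2) i(1) by auto
  moreover have "\<forall>v\<in>Pair i ` {..<n i}. S v \<inter> c ` Pair i ` {..<n i} \<noteq> {}"
    using c(1) cmp_part_subset[OF i(1), of n] by blast
  ultimately show ?thesis
    using i by blast
qed

lemma cmp_not_choosable:
  assumes n_pos: "\<forall>i\<le>s. n i > 0" and "r \<le> T" and L_sum: "(\<Sum>i=0..s. L i) = T"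
    and bound: "(\<Sum>i=0..s. 2 ^ T * exp (- (real (T - L i choose r) / real (T choose r)) * real (n i))) \<le> 1"
  shows "\<not> choosable (cmp_vertices s n) cmp_edge r"
proof
  assume ch: "choosable (cmp_vertices s n) cmp_edge r"
  define V where "V = cmp_vertices s n"
  define U where "U = {..<T}"
  define Lists where "Lists = PiE V (\<lambda>_. {X. X \<subseteq> U \<and> card X = r})"
  define Small where "Small i = {A. A \<subseteq> U \<and> A \<noteq> {} \<and> card A \<le> L i}" for i
  define Hit where "Hit i A = {S \<in> Lists. \<forall>v\<in>Pair i ` {..<n i}. S v \<inter> A \<noteq> {}}" for i A
  define p where "p i = exp (- (real (T - L i choose r) / real (T choose r)) * real (n i))" for i
  have cover: "Lists \<subseteq> (\<Union>i\<in>{0..s}. \<Union>A\<in>Small i. Hit i A)"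
  proof
    fix S assume S: "S \<in> Lists"
    then obtain i A where "i \<le> s" "A \<in> Small i" "S \<in> Hit i A"
      using cmp_choosable_lists_meet_small_class[OF ch n_pos, of U L S] L_sum
      unfolding Lists_def Small_def Hit_def U_def V_def by auto
    then show "S \<in> (\<Union>i\<in>{0..s}. \<Union>A\<in>Small i. Hit i A)"
      by auto
  qed
  have card_Hit: "real (card (Hit i A)) \<le> p i * real (card Lists)" if "i \<le> s" "A \<in> Small i" for i A
    using card_PiE_meeting_le[of V "Pair i ` {..<n i}" U A "L i" r] that assms(2)
      cmp_part_subset[OF that(1), of n] finite_cmp_vertices
    by (simp add: Hit_def Lists_def Small_def p_def U_def V_def card_image inj_on_def)
  have card_Small: "real (card (Small i)) \<le> 2 ^ T - 1" for i
  proof -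
    have "real (card (Small i)) \<le> real (2 ^ T - 1)"
      using card_nonempty_subsets_le[of U "\<lambda>A. card A \<le> L i"]
      unfolding Small_def U_def of_nat_le_iff by simp
    then show ?thesis
      by (simp add: of_nat_diff)
  qed
  have finite_Small: "finite (Small i)" for i
    by (rule finite_subset[of _ "Pow U"]) (auto simp: Small_def U_def)
  have finite_Lists: "finite Lists"
    unfolding Lists_def U_def V_def by (intro finite_PiE finite_cmp_vertices) auto
  have "{..<r} \<in> {X. X \<subseteq> U \<and> card X = r}"
    using assms(2) by (auto simp: U_def)
  then have "Lists \<noteq> {}"
    unfolding Lists_def PiE_eq_empty_iff by blast
  then have "1 \<le> (2 ^ T - 1) * (\<Sum>i=0..s. p i)"
    using finite_Lists finite_Small cover card_Hit card_Small
    by (intro card_union_bound[where H = Hit]) (auto simp: Hit_def p_def)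
  also have "\<dots> < 2 ^ T * (\<Sum>i=0..s. p i)"
    by (intro mult_strict_right_mono sum_pos) (auto simp: p_def)
  also have "\<dots> \<le> 1"
    using bound by (simp add: p_def sum_distrib_left)
  finally show False
    by simp
qed

theorem lemma6p1:
  fixes s r :: nat and n :: "nat \<Rightarrow> nat"
  assumes "s \<ge> 1" and "\<forall>i\<le>s. n i > 0" and "r > 0"
    and "\<exists>(t::int) (l::nat \<Rightarrow> int). t \<ge> int r \<and> (\<forall>i\<le>s. 0 \<le> l i \<and> l i \<le> t) \<and>
          (\<Sum>i=0..s. l i) = t \<and>
          (\<Sum>i=0..s. 2 ^ nat t * exp (- (falling_fact (t - l i) r / falling_fact t r) * real (n i))) \<le> 1"
  shows "choice_number (cmp_vertices s n) cmp_edge > r"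
proof -
  obtain t l where t: "t \<ge> int r" and l: "\<forall>i\<le>s. 0 \<le> l i \<and> l i \<le> t" and l_sum: "(\<Sum>i=0..s. l i) = t"
    and bound: "(\<Sum>i=0..s. 2 ^ nat t * exp (- (falling_fact (t - l i) r / falling_fact t r) * real (n i))) \<le> 1"
    using assms(4) by blast
  define T where "T = nat t"
  define L where "L i = nat (l i)" for i
  have t_eq: "t = int T" and l_eq: "\<And>i. i \<le> s \<Longrightarrow> l i = int (L i)"
    and diff_eq: "\<And>i. i \<le> s \<Longrightarrow> int T - l i = int (T - L i)"
    using t l by (auto simp: T_def L_def)
  have "int (\<Sum>i=0..s. L i) = (\<Sum>i=0..s. l i)"
    unfolding of_nat_sum by (rule sum.cong) (simp_all add: l_eq)
  then have L_sum: "(\<Sum>i=0..s. L i) = T"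
    by (simp only: l_sum t_eq of_nat_eq_iff)
  have "(\<Sum>i=0..s. 2 ^ T * exp (- (real (T - L i choose r) / real (T choose r)) * real (n i)))
      = (\<Sum>i=0..s. 2 ^ nat t * exp (- (falling_fact (t - l i) r / falling_fact t r) * real (n i)))"
    by (rule sum.cong) (simp_all only: t_eq diff_eq falling_fact_ratio_of_nat nat_int atLeastAtMost_iff)
  then have "\<not> choosable (cmp_vertices s n) cmp_edge r"
    using t t_eq bound by (intro cmp_not_choosable[OF assms(2) _ L_sum]) simp_all
  then show ?thesis
    by (rule choice_number_gt[OF finite_cmp_vertices, rotated]) (simp add: cmp_edge_def)
qed

end
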